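(* Let $\mathfrak g$ be a complex non-model filiform Lie algebra of dimension $n$, with invariant $z_2=z_2(\mathfrak g)$, and put $z_2^*=n+1-z_2$. Then: (i) for all integers $k,\ell,k',\ell'\ge 1$ with $k\le k'$ and $\ell\le \ell'$ one has $\dim[C^{k'}\mathfrak g,C^{\ell'}\mathfrak g]\le \dim[C^k\mathfrak g,C^\ell\mathfrak g]$; (ii) $[C^{z_2^*}\mathfrak g,C^{z_2^*}\mathfrak g]=\{0\}$; (iii) for every $k\ge 2$, $[C^k\mathfrak g,C^k\mathfrak g]=[C^k\mathfrak g,C^{k+1}\mathfrak g]$; consequently $\mathrm{hp}_{\mathfrak g,k,k}=\mathrm{hp}_{\mathfrak g,k+1,k}=\mathrm{hp}_{\mathfrak g,k,k+1}$ for all $k\ge 2$.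
   Context: All Lie algebras are over $\mathbb C$. The lower central series of a Lie algebra $\mathfrak g$ is $C^1\mathfrak g=\mathfrak g$, $C^k\mathfrak g=[C^{k-1}\mathfrak g,\mathfrak g]$ for $k\ge2$. A Lie algebra $\mathfrak g$ is filiform if $\dim\mathfrak g=n\ge 2$ and $\dim C^k\mathfrak g=n-k$ for $2\le k\le n$. The model filiform Lie algebra of dimension $n$ has a basis $e_1,\dots,e_n$ with $[e_1,e_h]=e_{h-1}$ for $3\le h\le n$ and all other brackets of basis vectors zero; "non-model" means not isomorphic to it (so $n\ge5$). An adapted basis of a filiform $\mathfrak g$ is a basis $\{e_1,\dots,e_n\}$ with $[e_1,e_h]=e_{h-1}$ ($3\le h\le n$), $[e_2,e_h]=0$ ($1\le h\le n$), $[e_3,e_h]=0$ ($2\le h\le n$); every filiform Lie algebra has one, and then $C^k\mathfrak g=\langle e_2,\dots,e_{n-k+1}\rangle$ for $2\le k\le n-1$. The invariant $z_2(\mathfrak g)=\max\{k\in\mathbb N: C^{n-k+1}\mathfrak g \text{ is abelian}\}$; equivalently, for any adapted basis, $z_2=\min\{k\ge4:[e_k,e_{k+1}]\ne0\}$. The Hilbert polynomial of $\mathfrak g$ is $\mathrm{HP}_{\mathfrak g}(t,s)=\sum_{k,\ell\ge1}\dim[C^k\mathfrak g,C^\ell\mathfrak g]\,t^ks^\ell\in\mathbb Z[t,s]$, and $\mathrm{hp}_{\mathfrak g,k,\ell}:=\dim[C^k\mathfrak g,C^\ell\mathfrak g]$ denotes the coefficient of $t^ks^\ell$. *)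

theory Defs
  imports Complex_Main
begin

text \<open>A complex Lie algebra is represented by its underlying additive group (the whole
type 'a), a complex scalar multiplication sc and a bracket br.\<close>

definition lie_algebra :: "(complex \<Rightarrow> 'a::ab_group_add \<Rightarrow> 'a) \<Rightarrow> ('a \<Rightarrow> 'a \<Rightarrow> 'a) \<Rightarrow> bool" where
  "lie_algebra sc br \<longleftrightarrow>
     vector_space sc \<and>
     (\<forall>a b x y z. br (sc a x + sc b y) z = sc a (br x z) + sc b (br y z)) \<and>
     (\<forall>a b x y z. br z (sc a x + sc b y) = sc a (br z x) + sc b (br z y)) \<and>
     (\<forall>x. br x x = 0) \<and>
     (\<forall>x y z. br x (br y z) + br y (br z x) + br z (br x y) = 0)"

definition fin_dim :: "(complex \<Rightarrow> 'a::ab_group_add \<Rightarrow> 'a) \<Rightarrow> bool" where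
  "fin_dim sc \<longleftrightarrow> (\<exists>B. finite B \<and> module.span sc B = UNIV)"

definition lie_brk :: "(complex \<Rightarrow> 'a::ab_group_add \<Rightarrow> 'a) \<Rightarrow> ('a \<Rightarrow> 'a \<Rightarrow> 'a) \<Rightarrow> 'a set \<Rightarrow> 'a set \<Rightarrow> 'a set" where
  "lie_brk sc br A B = module.span sc {br x y | x y. x \<in> A \<and> y \<in> B}"

text \<open>lcs0 m = C^(m+1).\<close>
primrec lcs0 :: "(complex \<Rightarrow> 'a::ab_group_add \<Rightarrow> 'a) \<Rightarrow> ('a \<Rightarrow> 'a \<Rightarrow> 'a) \<Rightarrow> nat \<Rightarrow> 'a set" where
  "lcs0 sc br 0 = UNIV"
| "lcs0 sc br (Suc m) = lie_brk sc br (lcs0 sc br m) UNIV"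

definition lcs :: "(complex \<Rightarrow> 'a::ab_group_add \<Rightarrow> 'a) \<Rightarrow> ('a \<Rightarrow> 'a \<Rightarrow> 'a) \<Rightarrow> nat \<Rightarrow> 'a set" where
  "lcs sc br k = lcs0 sc br (k - 1)"

definition lie_dim :: "(complex \<Rightarrow> 'a::ab_group_add \<Rightarrow> 'a) \<Rightarrow> nat" where
  "lie_dim sc = vector_space.dim sc (UNIV :: 'a set)"

definition filiform :: "(complex \<Rightarrow> 'a::ab_group_add \<Rightarrow> 'a) \<Rightarrow> ('a \<Rightarrow> 'a \<Rightarrow> 'a) \<Rightarrow> bool" where
  "filiform sc br \<longleftrightarrow> lie_algebra sc br \<and> fin_dim sc \<and> lie_dim sc \<ge> 2 \<and>
     (\<forall>k. 2 \<le> k \<and> k \<le> lie_dim sc \<longrightarrow> vector_space.dim sc (lcs sc br k) = lie_dim sc - k)"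

text \<open>g is isomorphic to the model filiform algebra of dimension n iff it has a basis
e_1,...,e_n whose brackets are those of the model algebra.\<close>
definition is_model :: "(complex \<Rightarrow> 'a::ab_group_add \<Rightarrow> 'a) \<Rightarrow> ('a \<Rightarrow> 'a \<Rightarrow> 'a) \<Rightarrow> bool" where
  "is_model sc br \<longleftrightarrow> (\<exists>e :: nat \<Rightarrow> 'a.
     inj_on e {1..lie_dim sc} \<and>
     \<not> module.dependent sc (e ` {1..lie_dim sc}) \<and>
     module.span sc (e ` {1..lie_dim sc}) = UNIV \<and>
     (\<forall>i\<in>{1..lie_dim sc}. \<forall>j\<in>{1..lie_dim sc}.
        br (e i) (e j) = (if i = 1 \<and> 3 \<le> j then e (j - 1)
                          else if j = 1 \<and> 3 \<le> i then - e (i - 1) else 0)))"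

definition abelian_sub :: "('a \<Rightarrow> 'a \<Rightarrow> 'a::ab_group_add) \<Rightarrow> 'a set \<Rightarrow> bool" where
  "abelian_sub br A \<longleftrightarrow> (\<forall>x\<in>A. \<forall>y\<in>A. br x y = 0)"

definition z2 :: "(complex \<Rightarrow> 'a::ab_group_add \<Rightarrow> 'a) \<Rightarrow> ('a \<Rightarrow> 'a \<Rightarrow> 'a) \<Rightarrow> nat" where
  "z2 sc br = (GREATEST k. abelian_sub br (lcs sc br (lie_dim sc - k + 1)))"

definition hp :: "(complex \<Rightarrow> 'a::ab_group_add \<Rightarrow> 'a) \<Rightarrow> ('a \<Rightarrow> 'a \<Rightarrow> 'a) \<Rightarrow> nat \<Rightarrow> nat \<Rightarrow> nat" where
  "hp sc br k l = vector_space.dim sc (lie_brk sc br (lcs sc br k) (lcs sc br l))"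

end

theory Submission
  imports Defs
begin

text \<open>Part (i) holds because the lower central series decreases and the bracket of subspaces
is monotone. Part (ii) is the defining property of z2, once one knows that C^(n+1) = 0.
Part (iii) rests on the fact that in a filiform algebra C^(k+1) has codimension at most one in
C^k: if V = L + Cx then, since [x, x] = 0, every bracket of two elements of V already lies in
[V, L].\<close>

locale bracket_space = vector_space scale
  for scale :: "complex \<Rightarrow> 'a::ab_group_add \<Rightarrow> 'a" and br :: "'a \<Rightarrow> 'a \<Rightarrow> 'a"
begin

lemma lie_brk_mono: "A \<subseteq> A' \<Longrightarrow> B \<subseteq> B' \<Longrightarrow> lie_brk scale br A B \<subseteq> lie_brk scale br A' B'"
  unfolding lie_brk_def by (rule span_mono) blast

lemma subspace_lie_brk: "subspace (lie_brk scale br A B)"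
  unfolding lie_brk_def by simp

lemma subspace_lcs: "subspace (lcs scale br k)"
  unfolding lcs_def by (cases "k - 1") (simp_all add: subspace_lie_brk)

lemma lcs_antimono:
  assumes "k \<le> k'"
  shows "lcs scale br k' \<subseteq> lcs scale br k"
proof -
  have "lcs0 scale br (Suc m) \<subseteq> lcs0 scale br m" for m
    by (induction m) (simp_all add: lie_brk_mono)
  then show ?thesis
    unfolding lcs_def
    by (rule lift_Suc_antimono_le[of "lcs0 scale br"]) (simp add: assms diff_le_mono)
qed

lemma lie_brk_eq_zero_if_abelian:
  assumes "abelian_sub br A"
  shows "lie_brk scale br A A = {0}"
proof -
  have "{br x y |x y. x \<in> A \<and> y \<in> A} \<subseteq> {0}"
    using assms by (auto simp: abelian_sub_def)
  then have "lie_brk scale br A A \<subseteq> {0}"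
    unfolding lie_brk_def by (rule span_minimal) (rule subspace_single_0)
  then show ?thesis
    using subspace_0[OF subspace_lie_brk] by blast
qed

text \<open>If C^k is abelian for some k > lie_dim, the index lie_dim - k + 1 in the definition of z2
truncates to 1 and the whole algebra is abelian; otherwise the greatest element exists.\<close>

lemma abelian_lcs_z2:
  assumes "abelian_sub br (lcs scale br (lie_dim scale + 1))"
  shows "abelian_sub br (lcs scale br (lie_dim scale + 1 - z2 scale br))"
proof -
  define n where "n = lie_dim scale"
  let ?P = "\<lambda>k. abelian_sub br (lcs scale br (n - k + 1))"
  have abelian_sub: "abelian_sub br A" if "abelian_sub br B" "A \<subseteq> B" for A B
    using that by (auto simp: abelian_sub_def)
  show ?thesis
  proof (cases "\<exists>b. \<forall>k. ?P k \<longrightarrow> k \<le> b")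
    case True
    then obtain b where "\<And>k. ?P k \<Longrightarrow> k \<le> b" by blast
    moreover have "?P 0"
      using assms n_def by simp
    ultimately have "?P (z2 scale br)"
      unfolding z2_def n_def[symmetric] by (rule GreatestI_nat[rotated])
    moreover have "lcs scale br (n + 1 - z2 scale br) \<subseteq> lcs scale br (n - z2 scale br + 1)"
      by (cases "z2 scale br \<le> n") (simp_all add: lcs_def)
    ultimately show ?thesis
      unfolding n_def by (rule abelian_sub)
  next
    case False
    then obtain k where "?P k" "\<not> k \<le> n" by blast
    then have "abelian_sub br (lcs scale br 1)" by simp
    moreover have "lcs scale br (n + 1 - z2 scale br) \<subseteq> lcs scale br 1"
      by (cases "n + 1 - z2 scale br") (simp_all add: lcs_def lcs_antimono)
    ultimately show ?thesis
      unfolding n_def by (rule abelian_sub)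
  qed
qed

end

context finite_dimensional_vector_space
begin

lemma exists_span_insert_of_codim_le_one:
  assumes "subspace L" "subspace V" "L \<subseteq> V" "dim V \<le> dim L + 1"
  obtains x where "x \<in> V" "V \<subseteq> span (insert x L)"
proof (cases "V \<subseteq> L")
  case True
  then show ?thesis
    using that[of 0] span_superset[of L] by (auto simp: subspace_0[OF assms(2)])
next
  case False
  then obtain x where x: "x \<in> V" "x \<notin> L" by blast
  moreover have "span L = L"
    using assms(1) by simp
  ultimately have "dim (insert x L) = dim L + 1"
    by (metis dim_insert)
  then have "span (insert x L) = span V"
    using assms x by (intro dim_eq_span) auto
  then have "V \<subseteq> span (insert x L)"
    using span_superset[of V] by simp
  with x(1) show ?thesis
    by (rule that)
qed

end

locale fd_bracket_space = bracket_space scale br + finite_dimensional_vector_space scale Basis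
  for scale :: "complex \<Rightarrow> 'a::ab_group_add \<Rightarrow> 'a" and br and Basis
begin

lemma hp_antimono:
  assumes "k \<le> k'" "l \<le> l'"
  shows "hp scale br k' l' \<le> hp scale br k l"
  unfolding hp_def using assms by (intro dim_subset lie_brk_mono lcs_antimono)

lemma filiform_lcs_eq_zero:
  assumes "filiform scale br" "lie_dim scale \<le> k"
  shows "lcs scale br k = {0}"
proof -
  have "dim (lcs scale br (lie_dim scale)) = 0"
    using assms(1) unfolding filiform_def by simp
  then have "lcs scale br k \<subseteq> {0}"
    using lcs_antimono[OF assms(2)] by auto
  then show ?thesis
    using subspace_0[OF subspace_lcs] by blast
qed

lemma filiform_lcs_codim_le_one:
  assumes "filiform scale br" "2 \<le> k"
  shows "dim (lcs scale br k) \<le> dim (lcs scale br (k + 1)) + 1"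
proof (cases "k < lie_dim scale")
  case True
  then show ?thesis
    using assms unfolding filiform_def by simp
next
  case False
  then show ?thesis
    using filiform_lcs_eq_zero[OF assms(1)] by simp
qed

end

locale alternating_bracket = bracket_space +
  assumes bilinear_left: "\<And>a b x y z. br (scale a x + scale b y) z = scale a (br x z) + scale b (br y z)"
    and bilinear_right: "\<And>a b x y z. br z (scale a x + scale b y) = scale a (br z x) + scale b (br z y)"
    and alternating: "\<And>x. br x x = 0"
begin

lemma br_add_left: "br (x + y) z = br x z + br y z"
  using bilinear_left[where a = 1 and b = 1] by simp

lemma br_add_right: "br z (x + y) = br z x + br z y"
  using bilinear_right[where a = 1 and b = 1] by simp

lemma br_scale_left: "br (scale c x) z = scale c (br x z)"
  using bilinear_left[where a = c and b = 0 and y = x] by simp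

lemma br_antisym: "br x y = - br y x"
proof -
  have "br x y + br y x = br (x + y) (x + y)"
    by (simp add: br_add_left br_add_right alternating[of x] alternating[of y])
  also have "\<dots> = 0"
    by (rule alternating)
  finally show ?thesis
    by (rule eq_neg_iff_add_eq_0[THEN iffD2])
qed

lemma lie_brk_commute: "lie_brk scale br A B = lie_brk scale br B A"
proof -
  have "lie_brk scale br A B \<subseteq> lie_brk scale br B A" for A B
    unfolding lie_brk_def
  proof (intro span_minimal subspace_span subsetI)
    fix z assume "z \<in> {br x y |x y. x \<in> A \<and> y \<in> B}"
    then obtain x y where "z = - br y x" "y \<in> B" "x \<in> A"
      using br_antisym by blast
    then show "z \<in> span {br x y |x y. x \<in> B \<and> y \<in> A}"
      by (blast intro: span_neg span_base)
  qed
  then show ?thesis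
    using subset_antisym by blast
qed

lemma lie_brk_self_eq_of_span_insert:
  assumes L: "subspace L" "L \<subseteq> V" and x: "x \<in> V" "V \<subseteq> span (insert x L)"
  shows "lie_brk scale br V V = lie_brk scale br V L"
proof
  show "lie_brk scale br V L \<subseteq> lie_brk scale br V V"
    using L(2) by (rule lie_brk_mono[OF subset_refl])
  let ?S = "{br v w |v w. v \<in> V \<and> w \<in> L}"
  have decompose: "\<exists>c. y - scale c x \<in> L" if y: "y \<in> V" for y
  proof -
    obtain c where "y - scale c x \<in> span L"
      using y x(2) unfolding span_insert by blast
    then show ?thesis
      using L(1) by (metis span_eq_iff)
  qed
  have bracket_in_span: "br v w \<in> span ?S" if "v \<in> V" "w \<in> V" for v w
  proof -
    obtain c d where c: "v - scale c x \<in> L" and d: "w - scale d x \<in> L"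
      using decompose \<open>v \<in> V\<close> \<open>w \<in> V\<close> by blast
    have "br v x = br (v - scale c x) x"
      using br_add_left[of "v - scale c x" "scale c x" x] by (simp add: br_scale_left alternating)
    also have "\<dots> = - br x (v - scale c x)"
      by (rule br_antisym)
    finally have "br v x \<in> span ?S"
      using x(1) c by (auto intro: span_neg span_base)
    moreover have "br v (w - scale d x) \<in> span ?S"
      using \<open>v \<in> V\<close> d by (auto intro: span_base)
    moreover have "br v w = br v (w - scale d x) + scale d (br v x)"
      using br_add_right[of v "w - scale d x" "scale d x"]
        bilinear_right[where a = d and b = 0 and x = x and z = v]
      by simp
    ultimately show ?thesis
      by (simp add: span_add span_scale)
  qed
  show "lie_brk scale br V V \<subseteq> lie_brk scale br V L"
    unfolding lie_brk_def
    by (rule span_minimal[OF _ subspace_span]) (auto intro: bracket_in_span)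
qed

end

lemma lie_algebra_alternating_bracket: "lie_algebra sc br \<Longrightarrow> alternating_bracket sc br"
  unfolding lie_algebra_def alternating_bracket_def alternating_bracket_axioms_def bracket_space_def
  by blast

lemma finite_dimensional_vector_space_if_fin_dim:
  assumes "vector_space sc" "fin_dim sc"
  obtains B where "finite_dimensional_vector_space sc B"
proof -
  interpret vector_space sc by fact
  obtain S where S: "finite S" "span S = UNIV"
    using assms(2) unfolding fin_dim_def by blast
  obtain B where B: "independent B" "UNIV \<subseteq> span B"
    using basis_exists[of UNIV] by blast
  have "finite B"
    using independent_span_bound[OF S(1) B(1)] S(2) by simp
  with B show ?thesis
    by (intro that) (unfold_locales, auto)
qed

theorem mainTheorem1:
  fixes sc :: "complex \<Rightarrow> 'a::ab_group_add \<Rightarrow> 'a" and br :: "'a \<Rightarrow> 'a \<Rightarrow> 'a"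
  assumes "filiform sc br" and "\<not> is_model sc br"
  shows "(\<forall>k l k' l'. 1 \<le> k \<and> 1 \<le> l \<and> k \<le> k' \<and> l \<le> l' \<longrightarrow> hp sc br k' l' \<le> hp sc br k l)
    \<and> lie_brk sc br (lcs sc br (lie_dim sc + 1 - z2 sc br)) (lcs sc br (lie_dim sc + 1 - z2 sc br)) = {0}
    \<and> (\<forall>k\<ge>2. lie_brk sc br (lcs sc br k) (lcs sc br k) = lie_brk sc br (lcs sc br k) (lcs sc br (k + 1))
             \<and> hp sc br k k = hp sc br (k + 1) k \<and> hp sc br k k = hp sc br k (k + 1))"
proof -
  have lie: "lie_algebra sc br" and "fin_dim sc"
    using assms(1) unfolding filiform_def by blast+
  from lie interpret alternating_bracket sc br
    by (rule lie_algebra_alternating_bracket)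
  obtain B where "finite_dimensional_vector_space sc B"
    using vector_space_axioms \<open>fin_dim sc\<close> by (rule finite_dimensional_vector_space_if_fin_dim)
  then interpret fd: fd_bracket_space sc br B
    by (simp add: fd_bracket_space_def bracket_space_def vector_space_axioms)
  have "abelian_sub br (lcs sc br (lie_dim sc + 1))"
    using fd.filiform_lcs_eq_zero[OF assms(1)] by (simp add: abelian_sub_def alternating)
  then have "lie_brk sc br (lcs sc br (lie_dim sc + 1 - z2 sc br))
      (lcs sc br (lie_dim sc + 1 - z2 sc br)) = {0}"
    by (intro lie_brk_eq_zero_if_abelian abelian_lcs_z2)
  moreover have "lie_brk sc br (lcs sc br k) (lcs sc br k)
      = lie_brk sc br (lcs sc br k) (lcs sc br (k + 1))" if k: "2 \<le> k" for k
  proof -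
    have sub: "lcs sc br (k + 1) \<subseteq> lcs sc br k"
      by (simp add: lcs_antimono)
    obtain x where "x \<in> lcs sc br k" "lcs sc br k \<subseteq> span (insert x (lcs sc br (k + 1)))"
      using fd.exists_span_insert_of_codim_le_one[OF subspace_lcs subspace_lcs sub
          fd.filiform_lcs_codim_le_one[OF assms(1) k]] .
    then show ?thesis
      by (intro lie_brk_self_eq_of_span_insert subspace_lcs sub)
  qed
  ultimately show ?thesis
    using fd.hp_antimono by (auto simp: hp_def lie_brk_commute)
qed

end
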